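(* Let $1<s_0<s_1$ and let $u$ be a $C^1$ function on $\mathcal{K}_{[s_0,s_1]}$ which vanishes near the conical boundary. Then there is a universal constant $C$ such that $$\|(s/t)u\|_{L^2(\mathcal{H}_{s_1})}\leq \|(s/t)u\|_{L^2(\mathcal{H}_{s_0})} + C\int_{s_0}^{s_1}s^{-1}E_{\mathrm{con}}(s,u)^{1/2}\,ds .$$
   Context: Coordinates $(t,x)\in\mathbb{R}^{2+1}$, $r=|x|$, $s=\sqrt{t^2-r^2}$. $\mathcal{K}=\{t>r+1\}$, $\mathcal{H}_s=\{t=\sqrt{s^2+r^2}\}$, $\mathcal{K}_{[s_0,s_1]}=\{(t,x)\in\mathcal{K}: s_0^2\le t^2-r^2\le s_1^2\}$; "vanishes near the conical boundary" means vanishing in a neighbourhood of $\{t=r+1\}$ (extension by zero outside $\mathcal{K}$). $\|f\|_{L^2(\mathcal{H}_s)}$ is the $L^2(\mathbb{R}^2)$ norm of $x\mapsto f(\sqrt{s^2+|x|^2},x)$, and $\int_{\mathcal{H}_s}f\,dx:=\int_{\mathbb{R}^2}f(\sqrt{s^2+|x|^2},x)dx$. $\bar\partial_s=(s/t)\partial_t$, $\bar\partial_a=(x^a/t)\partial_t+\partial_a$, $K:=s\bar\partial_s+2x^a\bar\partial_a$, and $E_{\mathrm{con}}(s,u):=\int_{\mathcal{H}_s}\big((Ku+u)^2+\sum_a|s\bar\partial_a u|^2\big)dx$. *)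

theory Defs
  imports "HOL-Analysis.Analysis"
begin

text \<open>Spacetime points of R^{2+1} are pairs (t, x) with t :: real and x :: real \<times> real
  (so r = norm x = sqrt(x1^2 + x2^2)).\<close>

type_synonym pt = "real \<times> (real \<times> real)"

definition hs :: "pt \<Rightarrow> real" where
  "hs p = sqrt ((fst p)\<^sup>2 - (norm (snd p))\<^sup>2)"

definition Kcone :: "pt set" where
  "Kcone = {p. fst p > norm (snd p) + 1}"

definition Kseg :: "real \<Rightarrow> real \<Rightarrow> pt set" where
  "Kseg s0 s1 = {p \<in> Kcone. s0\<^sup>2 \<le> (fst p)\<^sup>2 - (norm (snd p))\<^sup>2 \<and>
                             (fst p)\<^sup>2 - (norm (snd p))\<^sup>2 \<le> s1\<^sup>2}"

definition cone_bdry :: "pt set" where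
  "cone_bdry = {p. fst p = norm (snd p) + 1}"

definition zext :: "(pt \<Rightarrow> real) \<Rightarrow> pt \<Rightarrow> real" where
  "zext f p = (if p \<in> Kcone then f p else 0)"

definition hpt :: "real \<Rightarrow> real \<times> real \<Rightarrow> pt" where
  "hpt s x = (sqrt (s\<^sup>2 + (norm x)\<^sup>2), x)"

text \<open>Integral over H_s in the sense of the context: integral over R^2 of f(sqrt(s^2+|x|^2), x).\<close>
definition intH :: "real \<Rightarrow> (pt \<Rightarrow> real) \<Rightarrow> real" where
  "intH s f = (\<integral>x. zext f (hpt s x) \<partial>(lborel :: (real \<times> real) measure))"

definition L2H :: "real \<Rightarrow> (pt \<Rightarrow> real) \<Rightarrow> real" where
  "L2H s f = sqrt (intH s (\<lambda>p. (f p)\<^sup>2))"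

text \<open>C^1 on a set S with partial derivatives ut (in t), u1, u2 (in x^1, x^2).\<close>
definition C1_on :: "pt set \<Rightarrow> (pt \<Rightarrow> real) \<Rightarrow> (pt \<Rightarrow> real) \<Rightarrow> (pt \<Rightarrow> real)
    \<Rightarrow> (pt \<Rightarrow> real) \<Rightarrow> bool" where
  "C1_on S u ut u1 u2 \<longleftrightarrow>
     (\<forall>p\<in>S. (u has_derivative
        (\<lambda>h. ut p * fst h + u1 p * fst (snd h) + u2 p * snd (snd h))) (at p within S))
     \<and> continuous_on S ut \<and> continuous_on S u1 \<and> continuous_on S u2"

definition dbar_s :: "(pt \<Rightarrow> real) \<Rightarrow> pt \<Rightarrow> real" where
  "dbar_s ut p = (hs p / fst p) * ut p"

definition dbar_1 :: "(pt \<Rightarrow> real) \<Rightarrow> (pt \<Rightarrow> real) \<Rightarrow> pt \<Rightarrow> real" where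
  "dbar_1 ut u1 p = (fst (snd p) / fst p) * ut p + u1 p"

definition dbar_2 :: "(pt \<Rightarrow> real) \<Rightarrow> (pt \<Rightarrow> real) \<Rightarrow> pt \<Rightarrow> real" where
  "dbar_2 ut u2 p = (snd (snd p) / fst p) * ut p + u2 p"

definition Kop :: "(pt \<Rightarrow> real) \<Rightarrow> (pt \<Rightarrow> real) \<Rightarrow> (pt \<Rightarrow> real) \<Rightarrow> pt \<Rightarrow> real" where
  "Kop ut u1 u2 p = hs p * dbar_s ut p
      + 2 * (fst (snd p) * dbar_1 ut u1 p + snd (snd p) * dbar_2 ut u2 p)"

definition Econ :: "real \<Rightarrow> (pt \<Rightarrow> real) \<Rightarrow> (pt \<Rightarrow> real) \<Rightarrow> (pt \<Rightarrow> real)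
    \<Rightarrow> (pt \<Rightarrow> real) \<Rightarrow> real" where
  "Econ s u ut u1 u2 = intH s (\<lambda>p. (Kop ut u1 u2 p + u p)\<^sup>2
        + (s * dbar_1 ut u1 p)\<^sup>2 + (s * dbar_2 ut u2 p)\<^sup>2)"

end

theory Submission
  imports Defs
begin

(* Parametrise the hyperboloids by (s, x), so that t^2 = s^2 + |x|^2 on H_s, and let
   N(s) = ||(s/t) u||^2 on H_s. Differentiating under the integral and integrating by parts in x
   (no boundary terms, since u vanishes near the cone) gives
   s N'(s) = \<integral> 2 (s/t)^2 u (Ku + u - x^a dbar_a u) dx.
   Since |x| <= t, Young's and the Cauchy-Schwarz inequality bound this by 2 (2 N E_con)^(1/2),
   so (N^(1/2))' <= sqrt 2 s^(-1) E_con^(1/2), and integrating in s gives the estimate with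
   C = sqrt 2. *)

lemma le_two_sqrt_mult_if_scaled_bound:
  fixes A N M :: real
  assumes bound: "\<And>l. l > 0 \<Longrightarrow> A \<le> l * N + M / l" and "N \<ge> 0" "M \<ge> 0"
  shows "A \<le> 2 * sqrt (N * M)"
proof (cases "N > 0 \<and> M > 0")
  case True
  define l where "l = sqrt (M / N)"
  have "l > 0" using True by (simp add: l_def)
  moreover have "l * N = sqrt (N * M)" "M / l = sqrt (N * M)" using True
    by (simp_all add: l_def real_sqrt_divide real_sqrt_mult field_simps)
  ultimately show ?thesis using bound[of l] by simp
next
  case False
  then have NM: "N * M = 0" using assms(2,3) by auto
  show ?thesis
  proof (rule ccontr)
    assume "\<not> ?thesis"
    then have A: "A > 0" using NM by simp
    show False
    proof (cases "N = 0")
      case True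
      have "A \<le> M / ((M + 1) / A)" using bound[of "(M + 1) / A"] A \<open>M \<ge> 0\<close> True by simp
      also have "\<dots> < A" using A \<open>M \<ge> 0\<close> by (simp add: field_simps)
      finally show False by simp
    next
      case False
      then have "N > 0" "M = 0" using NM \<open>N \<ge> 0\<close> by auto
      then have "A \<le> A / (2 * N) * N" using bound[of "A / (2 * N)"] A by simp
      also have "\<dots> < A" using A \<open>N > 0\<close> by simp
      finally show False by simp
    qed
  qed
qed

lemma sqrt_le_sqrt_add_integral_if_deriv_le:
  fixes N N' G :: "real \<Rightarrow> real"
  assumes "a \<le> b"
    and deriv: "\<And>s. s \<in> {a..b} \<Longrightarrow> (N has_real_derivative N' s) (at s within {a..b})"
    and nonneg: "\<And>s. s \<in> {a..b} \<Longrightarrow> N s \<ge> 0" "\<And>s. s \<in> {a..b} \<Longrightarrow> G s \<ge> 0"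
    and growth: "\<And>s. s \<in> {a..b} \<Longrightarrow> N' s \<le> 2 * sqrt (N s) * G s"
    and "G integrable_on {a..b}"
  shows "sqrt (N b) \<le> sqrt (N a) + integral {a..b} G"
proof (rule field_le_epsilon)
  fix e :: real assume "e > 0"
  \<comment> \<open>unlike \<open>sqrt \<circ> N\<close>, \<open>F\<close> is differentiable where \<open>N\<close> vanishes\<close>
  define F where "F s = sqrt (N s + e\<^sup>2)" for s
  have pos: "N s + e\<^sup>2 > 0" if "s \<in> {a..b}" for s using nonneg(1)[OF that] \<open>e > 0\<close> by (simp add: add_nonneg_pos)
  have "((\<lambda>s. N' s / (2 * F s)) has_integral (F b - F a)) {a..b}"
  proof (rule fundamental_theorem_of_calculus[OF \<open>a \<le> b\<close>])
    fix s assume s: "s \<in> {a..b}"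
    have "(F has_real_derivative inverse (sqrt (N s + e\<^sup>2)) / 2 * N' s) (at s within {a..b})"
      unfolding F_def using deriv[OF s] pos[OF s]
      by (auto intro!: derivative_eq_intros)
    then show "(F has_vector_derivative N' s / (2 * F s)) (at s within {a..b})"
      by (simp add: has_real_derivative_iff_has_vector_derivative F_def field_simps)
  qed
  moreover have "N' s / (2 * F s) \<le> G s" if s: "s \<in> {a..b}" for s
  proof -
    have "sqrt (N s) \<le> F s" unfolding F_def by simp
    then have "2 * sqrt (N s) * G s \<le> 2 * F s * G s"
      using nonneg(2)[OF s] by (simp add: mult_right_mono)
    then show ?thesis using growth[OF s] pos[OF s] by (simp add: F_def field_simps)
  qed
  ultimately have "F b - F a \<le> integral {a..b} G"
    using has_integral_le[OF _ integrable_integral] assms(6) by blast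
  moreover have "sqrt (N b) \<le> F b" unfolding F_def by simp
  moreover have "F a \<le> sqrt (N a) + e"
    unfolding F_def using sqrt_add_le_add_sqrt[of "N a" "e\<^sup>2"] nonneg(1)[of a] \<open>a \<le> b\<close> \<open>e > 0\<close>
    by simp
  ultimately show "sqrt (N b) \<le> sqrt (N a) + integral {a..b} G + e" by linarith
qed

lemma weighted_cross_term_le:
  fixes s x1 x2 v k b1 b2 l :: real
  assumes s: "s > 0" and l: "l > 0"
  shows "2 * (s\<^sup>2 / (s\<^sup>2 + x1\<^sup>2 + x2\<^sup>2)) * v * (k - (x1 * b1 + x2 * b2))
     \<le> l * (s\<^sup>2 * v\<^sup>2 / (s\<^sup>2 + x1\<^sup>2 + x2\<^sup>2)) + 2 * (k\<^sup>2 + (s * b1)\<^sup>2 + (s * b2)\<^sup>2) / l"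
proof -
  define Q where "Q = s\<^sup>2 + x1\<^sup>2 + x2\<^sup>2"
  define D where "D = x1 * b1 + x2 * b2"
  have Q: "Q > 0" unfolding Q_def using s by (simp add: add_pos_nonneg)
  have young_k: "2 * (l * v) * k \<le> (l * v)\<^sup>2 / 2 + 2 * k\<^sup>2"
    using zero_le_power2[of "l * v - 2 * k"] by (simp add: power2_eq_square algebra_simps)
  have young_D: "- 2 * (l * v) * D \<le> (l * v)\<^sup>2 / 2 + 2 * D\<^sup>2"
    using zero_le_power2[of "l * v + 2 * D"] by (simp add: power2_eq_square algebra_simps)
  have cauchy_schwarz: "D\<^sup>2 \<le> Q * (b1\<^sup>2 + b2\<^sup>2)"
  proof -
    have "D\<^sup>2 \<le> (x1\<^sup>2 + x2\<^sup>2) * (b1\<^sup>2 + b2\<^sup>2)"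
      using zero_le_power2[of "x1 * b2 - x2 * b1"] unfolding D_def
      by (simp add: power2_eq_square algebra_simps)
    also have "\<dots> \<le> Q * (b1\<^sup>2 + b2\<^sup>2)" unfolding Q_def by (intro mult_right_mono) auto
    finally show ?thesis .
  qed
  have "s\<^sup>2 * k\<^sup>2 \<le> Q * k\<^sup>2" unfolding Q_def by (intro mult_right_mono) auto
  have "2 * l * s\<^sup>2 * v * (k - D) = s\<^sup>2 * (2 * (l * v) * k) + s\<^sup>2 * (- 2 * (l * v) * D)"
    by (simp add: algebra_simps)
  also have "\<dots> \<le> s\<^sup>2 * ((l * v)\<^sup>2 / 2 + 2 * k\<^sup>2) + s\<^sup>2 * ((l * v)\<^sup>2 / 2 + 2 * D\<^sup>2)"
    by (intro add_mono mult_left_mono young_k young_D) auto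
  also have "\<dots> = l\<^sup>2 * (s\<^sup>2 * v\<^sup>2) + 2 * (s\<^sup>2 * k\<^sup>2) + 2 * s\<^sup>2 * D\<^sup>2"
    by (simp add: algebra_simps power2_eq_square)
  also have "\<dots> \<le> l\<^sup>2 * (s\<^sup>2 * v\<^sup>2) + 2 * (Q * k\<^sup>2) + 2 * s\<^sup>2 * (Q * (b1\<^sup>2 + b2\<^sup>2))"
    using cauchy_schwarz \<open>s\<^sup>2 * k\<^sup>2 \<le> Q * k\<^sup>2\<close> by (intro add_mono mult_left_mono order.refl) auto
  also have "\<dots> = l\<^sup>2 * (s\<^sup>2 * v\<^sup>2) + 2 * Q * (k\<^sup>2 + (s * b1)\<^sup>2 + (s * b2)\<^sup>2)"
    by (simp add: algebra_simps power2_eq_square)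
  finally have scaled: "2 * l * s\<^sup>2 * v * (k - D) \<le> l\<^sup>2 * (s\<^sup>2 * v\<^sup>2) + 2 * Q * (k\<^sup>2 + (s * b1)\<^sup>2 + (s * b2)\<^sup>2)" .
  have "2 * (s\<^sup>2 / Q) * v * (k - D) = (2 * l * s\<^sup>2 * v * (k - D)) / (l * Q)"
    using l Q by (simp add: field_simps)
  also have "\<dots> \<le> (l\<^sup>2 * (s\<^sup>2 * v\<^sup>2) + 2 * Q * (k\<^sup>2 + (s * b1)\<^sup>2 + (s * b2)\<^sup>2)) / (l * Q)"
    using l Q scaled by (intro divide_right_mono) auto
  also have "\<dots> = l * (s\<^sup>2 * v\<^sup>2 / Q) + 2 * (k\<^sup>2 + (s * b1)\<^sup>2 + (s * b2)\<^sup>2) / l"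
    using l Q by (simp add: field_simps power2_eq_square)
  finally show ?thesis unfolding Q_def D_def .
qed

lemma integral_add_mult_deriv_eq_0:
  fixes g g' :: "real \<Rightarrow> real"
  assumes "R \<ge> 0"
    and deriv: "\<And>y. y \<in> {-R..R} \<Longrightarrow> (g has_real_derivative g' y) (at y within {-R..R})"
    and "g (-R) = 0" "g R = 0"
  shows "integral {-R..R} (\<lambda>y. g y + y * g' y) = 0"
proof -
  have "((\<lambda>y. g y + y * g' y) has_integral (R * g R - (-R) * g (-R))) {-R..R}"
  proof (rule fundamental_theorem_of_calculus)
    fix y assume "y \<in> {-R..R}"
    from DERIV_mult[OF DERIV_ident deriv[OF this]]
    show "((\<lambda>y. y * g y) has_vector_derivative g y + y * g' y) (at y within {-R..R})"
      by (simp add: has_real_derivative_iff_has_vector_derivative algebra_simps)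
  qed (use \<open>R \<ge> 0\<close> in simp)
  then show ?thesis using assms(3,4) by (simp add: integral_unique)
qed

lemma integral_square_div_radial_eq_0:
  fixes R :: real and h h1 h2 :: "real \<times> real \<Rightarrow> real"
  defines "C \<equiv> cbox (-R, -R) (R, R)"
  assumes "R \<ge> 0"
    and cont: "continuous_on C h" "continuous_on C h1" "continuous_on C h2"
    and deriv1: "\<And>y1 y2. (y1, y2) \<in> C \<Longrightarrow>
      ((\<lambda>y. h (y, y2)) has_real_derivative h1 (y1, y2)) (at y1 within {-R..R})"
    and deriv2: "\<And>y1 y2. (y1, y2) \<in> C \<Longrightarrow>
      ((\<lambda>y. h (y1, y)) has_real_derivative h2 (y1, y2)) (at y2 within {-R..R})"
    and boundary: "\<And>y1 y2. \<bar>y1\<bar> = R \<or> \<bar>y2\<bar> = R \<Longrightarrow> h (y1, y2) = 0"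
  shows "integral C (\<lambda>x. 2 * h x + fst x * h1 x + snd x * h2 x) = 0"
proof -
  have C: "C = {-R..R} \<times> {-R..R}" unfolding C_def cbox_Pair_eq by simp
  have cont1: "continuous_on C (\<lambda>x. h x + fst x * h1 x)"
    and cont2: "continuous_on C (\<lambda>x. h x + snd x * h2 x)"
    using cont by (auto intro!: continuous_intros)
  have "integral C (\<lambda>x. h x + fst x * h1 x)
      = integral {-R..R} (\<lambda>y1. integral {-R..R} (\<lambda>y2. h (y1, y2) + y1 * h1 (y1, y2)))"
    using integral_prod_continuous[OF cont1[unfolded C_def]] by (simp add: C_def cbox_interval)
  also have "\<dots> = integral {-R..R} (\<lambda>y2. integral {-R..R} (\<lambda>y1. h (y1, y2) + y1 * h1 (y1, y2)))"
    using integral_swap_continuous[of "-R" "-R" R R "\<lambda>y1 y2. h (y1, y2) + y1 * h1 (y1, y2)"] cont1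
    by (simp add: C_def cbox_interval case_prod_unfold)
  also have "\<dots> = integral {-R..R} (\<lambda>y2. 0)"
  proof (rule integral_cong)
    fix y2 assume "y2 \<in> {-R..R}"
    then show "integral {-R..R} (\<lambda>y1. h (y1, y2) + y1 * h1 (y1, y2)) = 0"
      by (intro integral_add_mult_deriv_eq_0[OF \<open>R \<ge> 0\<close>] deriv1 boundary) (auto simp: C)
  qed
  finally have int1: "integral C (\<lambda>x. h x + fst x * h1 x) = 0" by simp
  have "integral C (\<lambda>x. h x + snd x * h2 x)
      = integral {-R..R} (\<lambda>y1. integral {-R..R} (\<lambda>y2. h (y1, y2) + y2 * h2 (y1, y2)))"
    using integral_prod_continuous[OF cont2[unfolded C_def]] by (simp add: C_def cbox_interval)
  also have "\<dots> = integral {-R..R} (\<lambda>y1. 0)"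
  proof (rule integral_cong)
    fix y1 assume "y1 \<in> {-R..R}"
    then show "integral {-R..R} (\<lambda>y2. h (y1, y2) + y2 * h2 (y1, y2)) = 0"
      by (intro integral_add_mult_deriv_eq_0[OF \<open>R \<ge> 0\<close>] deriv2 boundary) (auto simp: C)
  qed
  finally have int2: "integral C (\<lambda>x. h x + snd x * h2 x) = 0" by simp
  have "integral C (\<lambda>x. 2 * h x + fst x * h1 x + snd x * h2 x)
      = integral C (\<lambda>x. h x + fst x * h1 x) + integral C (\<lambda>x. h x + snd x * h2 x)"
    using integrable_continuous[OF cont1[unfolded C_def]] integrable_continuous[OF cont2[unfolded C_def]]
    by (subst integral_add[symmetric]) (simp_all add: C_def algebra_simps)
  then show ?thesis using int1 int2 by simp
qed

lemma has_field_derivative_compose_curve: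
  fixes f :: "'a::real_normed_vector \<Rightarrow> real"
  assumes "(f has_derivative f') (at (\<gamma> t) within S)"
    and "(\<gamma> has_derivative (\<lambda>h. h *\<^sub>R d)) (at t within T)" "\<gamma> ` T \<subseteq> S"
  shows "((\<lambda>\<tau>. f (\<gamma> \<tau>)) has_field_derivative f' d) (at t within T)"
proof -
  have "((\<lambda>\<tau>. f (\<gamma> \<tau>)) has_derivative (\<lambda>h. f' (h *\<^sub>R d))) (at t within T)"
    using has_derivative_in_compose[OF assms(2) has_derivative_subset[OF assms(1,3)]] .
  moreover have "(\<lambda>h. f' (h *\<^sub>R d)) = (*) (f' d)"
    using linear_scale[OF has_derivative_linear[OF assms(1)]] by (simp add: fun_eq_iff)
  ultimately show ?thesis unfolding has_field_derivative_def by simp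
qed

lemma integral_lborel_eq_integral_cbox:
  fixes f :: "'a::euclidean_space \<Rightarrow> real"
  assumes "continuous_on (cbox a b) f" and "\<And>x. x \<notin> cbox a b \<Longrightarrow> f x = 0"
  shows "integral\<^sup>L lborel f = integral (cbox a b) f"
proof -
  have "(\<lambda>x. indicator (cbox a b) x *\<^sub>R f x) = f"
    using assms(2) by (auto simp: fun_eq_iff indicator_def)
  then have "integrable lborel f" using borel_integrable_compact[OF compact_cbox assms(1)] by simp
  then have "integral UNIV f = integral\<^sup>L lborel f"
    by (intro integral_unique has_integral_integral_lborel)
  moreover have "(\<lambda>x. if x \<in> cbox a b then f x else 0) = f" using assms(2) by auto
  ultimately show ?thesis using integral_restrict_UNIV[of "cbox a b" f] by simp
qed

abbreviation tsq :: "real \<Rightarrow> real \<times> real \<Rightarrow> real" where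
  "tsq s x \<equiv> s\<^sup>2 + (fst x)\<^sup>2 + (snd x)\<^sup>2"

locale dirichlet_slab =
  fixes s0 s1 R :: real and v a b1 b2 :: "real \<times> real \<times> real \<Rightarrow> real"
  assumes s0_pos: "0 < s0" and s0_less_s1: "s0 < s1" and R_nonneg: "0 \<le> R"
    and cont: "continuous_on ({s0..s1} \<times> cbox (-R, -R) (R, R)) v"
      "continuous_on ({s0..s1} \<times> cbox (-R, -R) (R, R)) a"
      "continuous_on ({s0..s1} \<times> cbox (-R, -R) (R, R)) b1"
      "continuous_on ({s0..s1} \<times> cbox (-R, -R) (R, R)) b2"
    and deriv: "\<And>p. p \<in> {s0..s1} \<times> cbox (-R, -R) (R, R) \<Longrightarrow>
      (v has_derivative (\<lambda>q. a p * fst q + b1 p * fst (snd q) + b2 p * snd (snd q)))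
        (at p within {s0..s1} \<times> cbox (-R, -R) (R, R))"
    and lateral_boundary: "\<And>s y1 y2. s \<in> {s0..s1} \<Longrightarrow> \<bar>y1\<bar> = R \<or> \<bar>y2\<bar> = R \<Longrightarrow> v (s, y1, y2) = 0"
begin

text \<open>In the application \<open>v, a, b1, b2\<close> are \<open>u\<close> and its frame derivatives
  \<open>dbar_s, dbar_1, dbar_2\<close> in the coordinates \<open>(s, x)\<close>.
  Then \<open>kpart\<close> is \<open>K u + u\<close>, \<open>wnorm s\<close> is \<open>\<parallel>(s/t) u\<parallel>\<^sup>2\<close> on \<open>H_s\<close> and \<open>cenergy s\<close> is
  \<open>E_con(s, u)\<close>.\<close>

abbreviation "U \<equiv> {s0..s1}"
abbreviation "C \<equiv> cbox (-R, -R) (R, R)"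

definition kpart :: "real \<Rightarrow> real \<times> real \<Rightarrow> real" where
  "kpart s x = s * a (s, x) + 2 * (fst x * b1 (s, x) + snd x * b2 (s, x)) + v (s, x)"

definition wnorm :: "real \<Rightarrow> real" where
  "wnorm s = integral C (\<lambda>x. s\<^sup>2 * (v (s, x))\<^sup>2 / tsq s x)"

definition wnorm' :: "real \<Rightarrow> real" where
  "wnorm' s = integral C (\<lambda>x. 2 * s * (v (s, x))\<^sup>2 * ((fst x)\<^sup>2 + (snd x)\<^sup>2) / (tsq s x)\<^sup>2
     + 2 * s\<^sup>2 * v (s, x) * a (s, x) / tsq s x)"

definition cenergy :: "real \<Rightarrow> real" where
  "cenergy s = integral C (\<lambda>x. (kpart s x)\<^sup>2 + (s * b1 (s, x))\<^sup>2 + (s * b2 (s, x))\<^sup>2)"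

lemma pos_of_slab: "s \<in> U \<Longrightarrow> s > 0"
  using s0_pos by auto

lemma tsq_pos: "s \<in> U \<Longrightarrow> tsq s x > 0"
  using pos_of_slab[of s] by (simp add: add_pos_nonneg)

lemma tsq_nonzero: "s \<in> U \<Longrightarrow> tsq s x \<noteq> 0"
  using tsq_pos[of s x] by linarith

lemma tsq_nonzero_on_slab: "p \<in> U \<times> C \<Longrightarrow> tsq (fst p) (snd p) \<noteq> 0"
  using tsq_nonzero by auto

lemma continuous_on_slab [continuous_intros]:
  "continuous_on (U \<times> C) (\<lambda>p. v (fst p, snd p))" "continuous_on (U \<times> C) (\<lambda>p. a (fst p, snd p))"
  "continuous_on (U \<times> C) (\<lambda>p. b1 (fst p, snd p))" "continuous_on (U \<times> C) (\<lambda>p. b2 (fst p, snd p))"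
  using cont by simp_all

lemma continuous_on_slice:
  fixes f :: "real \<times> real \<times> real \<Rightarrow> real"
  assumes "continuous_on (U \<times> C) f" "s \<in> U"
  shows "continuous_on C (\<lambda>x. f (s, x))"
  by (rule continuous_on_compose2[OF assms(1)]) (use assms(2) in \<open>auto intro!: continuous_intros\<close>)

lemma continuous_on_slices [continuous_intros]:
  "s \<in> U \<Longrightarrow> continuous_on C (\<lambda>x. v (s, x))" "s \<in> U \<Longrightarrow> continuous_on C (\<lambda>x. a (s, x))"
  "s \<in> U \<Longrightarrow> continuous_on C (\<lambda>x. b1 (s, x))" "s \<in> U \<Longrightarrow> continuous_on C (\<lambda>x. b2 (s, x))"
  using continuous_on_slice cont by blast+

lemma slice_integrable:
  fixes f :: "real \<times> real \<times> real \<Rightarrow> real"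
  assumes "continuous_on (U \<times> C) f" "s \<in> U"
  shows "(\<lambda>x. f (s, x)) integrable_on C"
  using integrable_continuous[OF continuous_on_slice[OF assms]] by simp

lemma partial_deriv_s:
  assumes "s \<in> U" "x \<in> C"
  shows "((\<lambda>\<sigma>. v (\<sigma>, x)) has_real_derivative a (s, x)) (at s within U)"
proof -
  have curve: "((\<lambda>\<sigma>. (\<sigma>, x)) has_derivative (\<lambda>h. h *\<^sub>R (1, 0, 0))) (at s within U)"
    by (rule has_derivative_eq_rhs, (rule derivative_intros)+) (simp add: fun_eq_iff zero_prod_def)
  have img: "(\<lambda>\<sigma>. (\<sigma>, x)) ` U \<subseteq> U \<times> C" using assms by auto
  show ?thesis using has_field_derivative_compose_curve[OF deriv curve img] assms by simp
qed

lemma partial_deriv_1: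
  assumes "s \<in> U" "(y1, y2) \<in> C"
  shows "((\<lambda>y. v (s, y, y2)) has_real_derivative b1 (s, y1, y2)) (at y1 within {-R..R})"
proof -
  have curve: "((\<lambda>y. (s, y, y2)) has_derivative (\<lambda>h. h *\<^sub>R (0, 1, 0))) (at y1 within {-R..R})"
    by (rule has_derivative_eq_rhs, (rule derivative_intros)+) (simp add: fun_eq_iff zero_prod_def)
  have img: "(\<lambda>y. (s, y, y2)) ` {-R..R} \<subseteq> U \<times> C" using assms by auto
  show ?thesis using has_field_derivative_compose_curve[OF deriv curve img] assms by simp
qed

lemma partial_deriv_2:
  assumes "s \<in> U" "(y1, y2) \<in> C"
  shows "((\<lambda>y. v (s, y1, y)) has_real_derivative b2 (s, y1, y2)) (at y2 within {-R..R})"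
proof -
  have curve: "((\<lambda>y. (s, y1, y)) has_derivative (\<lambda>h. h *\<^sub>R (0, 0, 1))) (at y2 within {-R..R})"
    by (rule has_derivative_eq_rhs, (rule derivative_intros)+) (simp add: fun_eq_iff zero_prod_def)
  have img: "(\<lambda>y. (s, y1, y)) ` {-R..R} \<subseteq> U \<times> C" using assms by auto
  show ?thesis using has_field_derivative_compose_curve[OF deriv curve img] assms by simp
qed

lemma wnorm_has_derivative:
  assumes "s \<in> U"
  shows "(wnorm has_real_derivative wnorm' s) (at s within U)"
proof -
  have "((\<lambda>\<sigma>. \<sigma>\<^sup>2 * (v (\<sigma>, x))\<^sup>2 / tsq \<sigma> x) has_real_derivative
      2 * \<sigma> * (v (\<sigma>, x))\<^sup>2 * ((fst x)\<^sup>2 + (snd x)\<^sup>2) / (tsq \<sigma> x)\<^sup>2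
      + 2 * \<sigma>\<^sup>2 * v (\<sigma>, x) * a (\<sigma>, x) / tsq \<sigma> x) (at \<sigma> within U)"
    if "\<sigma> \<in> U" "x \<in> C" for \<sigma> x
  proof -
    note Q = tsq_nonzero[OF that(1), of x]
    show ?thesis
      apply (rule derivative_eq_intros partial_deriv_s[OF that] refl | simp add: Q)+
      using Q apply (simp add: divide_simps)
      apply (simp add: algebra_simps power2_eq_square)
      done
  qed
  moreover have "(\<lambda>x. \<sigma>\<^sup>2 * (v (\<sigma>, x))\<^sup>2 / tsq \<sigma> x) integrable_on C" if "\<sigma> \<in> U" for \<sigma>
  proof -
    have "continuous_on (U \<times> C) (\<lambda>p. (fst p)\<^sup>2 * (v (fst p, snd p))\<^sup>2 / tsq (fst p) (snd p))"
      using tsq_nonzero_on_slab by (intro continuous_intros) auto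
    from slice_integrable[OF this that] show ?thesis by simp
  qed
  moreover have "continuous_on (U \<times> C) (\<lambda>(\<sigma>, x).
      2 * \<sigma> * (v (\<sigma>, x))\<^sup>2 * ((fst x)\<^sup>2 + (snd x)\<^sup>2) / (tsq \<sigma> x)\<^sup>2
      + 2 * \<sigma>\<^sup>2 * v (\<sigma>, x) * a (\<sigma>, x) / tsq \<sigma> x)"
    unfolding case_prod_unfold using tsq_nonzero_on_slab
    by (intro continuous_intros) auto
  ultimately show ?thesis
    unfolding wnorm_def wnorm'_def has_real_derivative_iff_has_vector_derivative
    using assms by (intro leibniz_rule_vector_derivative) auto
qed

lemma scaled_wnorm'_eq:
  assumes s: "s \<in> U"
  shows "s * wnorm' s = integral C (\<lambda>x. 2 * (s\<^sup>2 / tsq s x) * v (s, x)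
    * (kpart s x - (fst x * b1 (s, x) + snd x * b2 (s, x))))"
proof -
  define h where "h x = s\<^sup>2 * (v (s, x))\<^sup>2 / tsq s x" for x
  define h1 where "h1 x = 2 * s\<^sup>2 * v (s, x) * b1 (s, x) / tsq s x
      - 2 * s\<^sup>2 * fst x * (v (s, x))\<^sup>2 / (tsq s x)\<^sup>2" for x
  define h2 where "h2 x = 2 * s\<^sup>2 * v (s, x) * b2 (s, x) / tsq s x
      - 2 * s\<^sup>2 * snd x * (v (s, x))\<^sup>2 / (tsq s x)\<^sup>2" for x
  note Q = tsq_nonzero[OF s]
  have cont_h: "continuous_on C h" "continuous_on C h1" "continuous_on C h2"
    unfolding h_def h1_def h2_def using s Q by (auto intro!: continuous_intros)
  have "((\<lambda>y. h (y, y2)) has_real_derivative h1 (y1, y2)) (at y1 within {-R..R})"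
    if "(y1, y2) \<in> C" for y1 y2
    unfolding h_def h1_def fst_conv snd_conv
    apply (rule derivative_eq_intros partial_deriv_1[OF s that] refl | simp add: Q[of "(y1, y2)", simplified])+
    using Q[of "(y1, y2)"] apply (simp add: divide_simps)
    apply (simp add: algebra_simps power2_eq_square)
    done
  moreover have "((\<lambda>y. h (y1, y)) has_real_derivative h2 (y1, y2)) (at y2 within {-R..R})"
    if "(y1, y2) \<in> C" for y1 y2
    unfolding h_def h2_def fst_conv snd_conv
    apply (rule derivative_eq_intros partial_deriv_2[OF s that] refl | simp add: Q[of "(y1, y2)", simplified])+
    using Q[of "(y1, y2)"] apply (simp add: divide_simps)
    apply (simp add: algebra_simps power2_eq_square)
    done
  moreover have "h (y1, y2) = 0" if "\<bar>y1\<bar> = R \<or> \<bar>y2\<bar> = R" for y1 y2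
    unfolding h_def using lateral_boundary[OF s that] by simp
  ultimately have div_free: "integral C (\<lambda>x. 2 * h x + fst x * h1 x + snd x * h2 x) = 0"
    using integral_square_div_radial_eq_0[OF R_nonneg cont_h] by blast
  \<comment> \<open>\<open>s \<partial>\<^sub>s h\<close> is the cross term minus the divergence of \<open>h x\<close>\<close>
  have "s * (2 * s * (v (s, x))\<^sup>2 * ((fst x)\<^sup>2 + (snd x)\<^sup>2) / (tsq s x)\<^sup>2
      + 2 * s\<^sup>2 * v (s, x) * a (s, x) / tsq s x)
    = 2 * (s\<^sup>2 / tsq s x) * v (s, x) * (kpart s x - (fst x * b1 (s, x) + snd x * b2 (s, x)))
      - (2 * h x + fst x * h1 x + snd x * h2 x)" for x
    using Q[of x] unfolding h_def h1_def h2_def kpart_def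
    by (simp add: divide_simps) (simp add: algebra_simps power2_eq_square)
  moreover have "(\<lambda>x. 2 * (s\<^sup>2 / tsq s x) * v (s, x)
      * (kpart s x - (fst x * b1 (s, x) + snd x * b2 (s, x)))) integrable_on C"
    unfolding kpart_def using s Q
    by (intro integrable_continuous continuous_intros) auto
  moreover have "(\<lambda>x. 2 * h x + fst x * h1 x + snd x * h2 x) integrable_on C"
    using cont_h by (intro integrable_continuous continuous_intros)
  ultimately show ?thesis
    unfolding wnorm'_def integral_mult_right[symmetric] using div_free
    by (simp add: integral_diff)
qed

lemma wnorm_nonneg: "s \<in> U \<Longrightarrow> wnorm s \<ge> 0"
  unfolding wnorm_def
  by (intro integral_nonneg integrable_continuous continuous_intros)
     (use tsq_pos in \<open>auto simp: less_imp_neq[symmetric]\<close>)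

lemma cenergy_nonneg: "s \<in> U \<Longrightarrow> cenergy s \<ge> 0"
  unfolding cenergy_def kpart_def
  by (intro integral_nonneg integrable_continuous continuous_intros) auto

lemma continuous_on_cenergy: "continuous_on U cenergy"
  unfolding cenergy_def kpart_def
  by (rule integral_continuous_on_param) (auto simp: case_prod_unfold intro!: continuous_intros cont)

lemma scaled_wnorm'_le:
  assumes s: "s \<in> U"
  shows "s * wnorm' s \<le> 2 * sqrt (wnorm s * (2 * cenergy s))"
proof (rule le_two_sqrt_mult_if_scaled_bound)
  fix l :: real assume "l > 0"
  define wd where "wd x = s\<^sup>2 * (v (s, x))\<^sup>2 / tsq s x" for x
  define ed where "ed x = (kpart s x)\<^sup>2 + (s * b1 (s, x))\<^sup>2 + (s * b2 (s, x))\<^sup>2" for x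
  note Q = tsq_nonzero[OF s]
  have int: "wd integrable_on C" "ed integrable_on C"
    unfolding wd_def ed_def kpart_def using s Q
    by (auto intro!: integrable_continuous continuous_intros)
  have "s * wnorm' s \<le> integral C (\<lambda>x. l * wd x + 2 * ed x / l)"
    unfolding scaled_wnorm'_eq[OF s]
  proof (rule integral_le)
    show "(\<lambda>x. 2 * (s\<^sup>2 / tsq s x) * v (s, x)
      * (kpart s x - (fst x * b1 (s, x) + snd x * b2 (s, x)))) integrable_on C"
      unfolding kpart_def using s Q by (intro integrable_continuous continuous_intros) auto
    show "(\<lambda>x. l * wd x + 2 * ed x / l) integrable_on C"
      using int by (intro integrable_add integrable_on_mult_right integrable_on_divide)
    fix x
    show "2 * (s\<^sup>2 / tsq s x) * v (s, x) * (kpart s x - (fst x * b1 (s, x) + snd x * b2 (s, x)))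
        \<le> l * wd x + 2 * ed x / l"
      unfolding wd_def ed_def
      using weighted_cross_term_le[OF pos_of_slab[OF s] \<open>l > 0\<close>] by simp
  qed
  also have "\<dots> = integral C (\<lambda>x. l * wd x) + integral C (\<lambda>x. 2 * ed x / l)"
    using int by (intro integral_add integrable_on_mult_right integrable_on_divide)
  also have "\<dots> = l * wnorm s + 2 * cenergy s / l"
    by (simp only: integral_mult_right integral_divide wnorm_def cenergy_def wd_def[abs_def] ed_def[abs_def])
  finally show "s * wnorm' s \<le> l * wnorm s + 2 * cenergy s / l" .
qed (use wnorm_nonneg cenergy_nonneg s in auto)

theorem sqrt_wnorm_le:
  "sqrt (wnorm s1) \<le> sqrt (wnorm s0) + sqrt 2 * integral U (\<lambda>s. 1 / s * sqrt (cenergy s))"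
proof -
  define G where "G s = sqrt 2 * (1 / s * sqrt (cenergy s))" for s
  have "continuous_on U G"
    unfolding G_def using pos_of_slab
    by (intro continuous_intros continuous_on_cenergy) (auto simp: less_imp_neq[symmetric])
  moreover have "wnorm' s \<le> 2 * sqrt (wnorm s) * G s" if s: "s \<in> U" for s
  proof -
    have "s * wnorm' s \<le> s * (2 * sqrt (wnorm s) * G s)"
      using scaled_wnorm'_le[OF s] pos_of_slab[OF s]
      by (simp add: G_def real_sqrt_mult field_simps)
    then show ?thesis using pos_of_slab[OF s] by simp
  qed
  moreover have "G s \<ge> 0" if "s \<in> U" for s
    unfolding G_def using cenergy_nonneg[OF that] pos_of_slab[OF that] by simp
  ultimately have "sqrt (wnorm s1) \<le> sqrt (wnorm s0) + integral U G"
    using s0_less_s1 wnorm_has_derivative wnorm_nonneg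
    by (intro sqrt_le_sqrt_add_integral_if_deriv_le integrable_continuous_real) auto
  then show ?thesis unfolding G_def integral_mult_right .
qed

end

lemma norm_sq_pair: "(norm (x :: real \<times> real))\<^sup>2 = (fst x)\<^sup>2 + (snd x)\<^sup>2"
  by (simp add: norm_prod_def)

lemma hpt_simps [simp]:
  assumes "s \<ge> 0"
  shows "fst (hpt s x) = sqrt (s\<^sup>2 + (norm x)\<^sup>2)" "snd (hpt s x) = x" "hs (hpt s x) = s"
  using assms by (simp_all add: hpt_def hs_def)

lemma hpt_in_Kcone_iff:
  assumes "s > 0"
  shows "hpt s x \<in> Kcone \<longleftrightarrow> norm x < (s\<^sup>2 - 1) / 2"
proof -
  have "hpt s x \<in> Kcone \<longleftrightarrow> norm x + 1 < sqrt (s\<^sup>2 + (norm x)\<^sup>2)"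
    by (simp add: Kcone_def hpt_def)
  also have "\<dots> \<longleftrightarrow> sqrt ((norm x + 1)\<^sup>2) < sqrt (s\<^sup>2 + (norm x)\<^sup>2)"
    by (simp add: add_nonneg_nonneg)
  also have "\<dots> \<longleftrightarrow> (norm x + 1)\<^sup>2 < s\<^sup>2 + (norm x)\<^sup>2"
    by (rule real_sqrt_less_iff)
  also have "\<dots> \<longleftrightarrow> norm x < (s\<^sup>2 - 1) / 2"
    by (simp add: power2_eq_square algebra_simps)
  finally show ?thesis .
qed

lemma hpt_in_Kseg_iff:
  assumes "0 < s0" "s \<in> {s0..s1}"
  shows "hpt s x \<in> Kseg s0 s1 \<longleftrightarrow> norm x < (s\<^sup>2 - 1) / 2"
proof -
  have "(fst (hpt s x))\<^sup>2 - (norm (snd (hpt s x)))\<^sup>2 = s\<^sup>2"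
    by (simp add: hpt_def)
  moreover have "s0\<^sup>2 \<le> s\<^sup>2" "s\<^sup>2 \<le> s1\<^sup>2" using assms by (auto intro!: power_mono)
  ultimately show ?thesis unfolding Kseg_def using hpt_in_Kcone_iff[of s] assms by auto
qed

lemma hpt_has_derivative:
  assumes "s > 0"
  shows "((\<lambda>q. hpt (fst q) (snd q)) has_derivative
    (\<lambda>h. ((s * fst h + fst x * fst (snd h) + snd x * snd (snd h)) / sqrt (s\<^sup>2 + (norm x)\<^sup>2), snd h)))
    (at (s, x) within S)"
proof -
  have pos: "0 < s\<^sup>2 + ((fst x)\<^sup>2 + (snd x)\<^sup>2)" using assms by (simp add: add_pos_nonneg)
  have "(\<lambda>q. hpt (fst q) (snd q)) = (\<lambda>q. (sqrt ((fst q)\<^sup>2 + ((fst (snd q))\<^sup>2 + (snd (snd q))\<^sup>2)), snd q))"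
    by (simp add: fun_eq_iff hpt_def norm_sq_pair)
  then show ?thesis
    using pos by (auto intro!: derivative_eq_intros simp: norm_sq_pair divide_simps)
qed

lemma band_near_cone_in_open_nhd:
  assumes "0 < s0" "open V" "cone_bdry \<subseteq> V"
  obtains \<delta> where "\<delta> > 0"
    "\<And>s x. s \<in> {s0..s1} \<Longrightarrow> (s\<^sup>2 - 1) / 2 - \<delta> < norm x \<Longrightarrow> norm x < (s\<^sup>2 - 1) / 2 \<Longrightarrow> hpt s x \<in> V"
proof -
  define A where "A = (\<lambda>x::real \<times> real. (norm x + 1, x)) ` cball 0 ((s1\<^sup>2 - 1) / 2)"
  have "compact A" unfolding A_def
    by (intro compact_continuous_image continuous_intros compact_cball)
  moreover have "A \<subseteq> V" using assms(3) unfolding A_def cone_bdry_def by auto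
  ultimately obtain e where e: "e > 0" "(\<Union>q\<in>A. ball q e) \<subseteq> V"
    using compact_subset_open_imp_ball_epsilon_subset[OF _ assms(2)] by metis
  show ?thesis
  proof (rule that[of "e / 2"])
    fix s and x :: "real \<times> real"
    assume s: "s \<in> {s0..s1}" and lo: "(s\<^sup>2 - 1) / 2 - e / 2 < norm x" and hi: "norm x < (s\<^sup>2 - 1) / 2"
    define r where "r = norm x"
    define m where "m = s\<^sup>2 - 1 - 2 * r"
    have "r \<ge> 0" "m > 0" "m < e" using lo hi by (auto simp: r_def m_def field_simps)
    have "s\<^sup>2 \<le> s1\<^sup>2" using s assms(1) by (intro power_mono) auto
    then have "(r + 1, x) \<in> A" using hi unfolding A_def r_def by (intro rev_image_eqI[of x]) auto
    have "r + 1 < fst (hpt s x)"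
      using hpt_in_Kcone_iff[of s x] hi s assms(1) by (simp add: Kcone_def r_def)
    moreover have "fst (hpt s x) \<le> r + 1 + m"
    proof -
      have "s\<^sup>2 + r\<^sup>2 = (r + 1)\<^sup>2 + m" unfolding m_def by (simp add: power2_eq_square algebra_simps)
      also have "\<dots> \<le> (r + 1 + m)\<^sup>2"
        using \<open>r \<ge> 0\<close> \<open>m > 0\<close> by (simp add: power2_eq_square algebra_simps)
      finally show ?thesis
        using \<open>r \<ge> 0\<close> \<open>m > 0\<close> by (simp add: hpt_def r_def real_le_lsqrt)
    qed
    ultimately have "dist (hpt s x) (r + 1, x) < e"
      using \<open>m < e\<close> by (simp add: hpt_def dist_Pair_Pair dist_real_def)
    then have "hpt s x \<in> ball (r + 1, x) e" by (simp add: dist_commute)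
    then show "hpt s x \<in> V" using e(2) \<open>(r + 1, x) \<in> A\<close> by blast
  qed (use e in simp)
qed

definition hyp_pullback :: "(pt \<Rightarrow> real) \<Rightarrow> real \<times> real \<times> real \<Rightarrow> real" where
  "hyp_pullback f q = zext f (hpt (fst q) (snd q))"

definition inside_cone :: "(real \<times> real \<times> real) set" where
  "inside_cone = {q. norm (snd q) < ((fst q)\<^sup>2 - 1) / 2}"

lemma open_inside_cone: "open inside_cone"
  unfolding inside_cone_def by (intro open_Collect_less continuous_intros) auto

text \<open>The band of width \<open>\<delta>\<close> inside the cone on which \<open>u\<close> vanishes is what makes the
  zero extensions of \<open>u\<close> and of its derivatives continuous across the cone.\<close>

locale vanishing_near_cone =
  fixes s0 s1 \<delta> :: real and u ut u1 u2 :: "pt \<Rightarrow> real"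
  assumes one_less_s0: "1 < s0" and s0_less_s1: "s0 < s1"
    and C1: "C1_on (Kseg s0 s1) u ut u1 u2"
    and \<delta>_pos: "\<delta> > 0"
    and zero_near_cone: "\<And>s x. s \<in> {s0..s1} \<Longrightarrow> (s\<^sup>2 - 1) / 2 - \<delta> < norm x \<Longrightarrow>
      norm x < (s\<^sup>2 - 1) / 2 \<Longrightarrow> u (hpt s x) = 0"
begin

lemma pos_of_slab: "s \<in> {s0..s1} \<Longrightarrow> s > 0"
  using one_less_s0 by auto

lemma pullback_inside:
  "s \<in> {s0..s1} \<Longrightarrow> norm x < (s\<^sup>2 - 1) / 2 \<Longrightarrow> hyp_pullback f (s, x) = f (hpt s x)"
  using hpt_in_Kcone_iff[OF pos_of_slab] by (simp add: hyp_pullback_def zext_def)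

lemma pullback_outside:
  "s \<in> {s0..s1} \<Longrightarrow> \<not> norm x < (s\<^sup>2 - 1) / 2 \<Longrightarrow> hyp_pullback f (s, x) = 0"
  using hpt_in_Kcone_iff[OF pos_of_slab] by (simp add: hyp_pullback_def zext_def)

lemma pullback_u_near_cone:
  "s \<in> {s0..s1} \<Longrightarrow> (s\<^sup>2 - 1) / 2 - \<delta> < norm x \<Longrightarrow> hyp_pullback u (s, x) = 0"
  using zero_near_cone pullback_inside pullback_outside by metis

lemma hpt_in_Kseg: "s \<in> {s0..s1} \<Longrightarrow> norm x < (s\<^sup>2 - 1) / 2 \<Longrightarrow> hpt s x \<in> Kseg s0 s1"
  using hpt_in_Kseg_iff[of s0 s s1 x] one_less_s0 by simp

definition near_cone :: "(real \<times> real \<times> real) set" where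
  "near_cone = {q. ((fst q)\<^sup>2 - 1) / 2 - \<delta> < norm (snd q)}"

lemma open_near_cone: "open near_cone"
  unfolding near_cone_def by (intro open_Collect_less continuous_intros) auto

lemma inside_or_near_cone: "q \<in> inside_cone \<or> q \<in> near_cone"
proof -
  have "norm (snd q) < ((fst q)\<^sup>2 - 1) / 2 \<or> ((fst q)\<^sup>2 - 1) / 2 - \<delta> < norm (snd q)"
    using \<delta>_pos by linarith
  then show ?thesis unfolding inside_cone_def near_cone_def by blast
qed

lemma norm_less_if_inside:
  assumes s: "s \<in> {s0..s1}" and x: "norm x < (s\<^sup>2 - 1) / 2"
  shows "norm x < s1\<^sup>2"
proof -
  have "s\<^sup>2 \<le> s1\<^sup>2" using s pos_of_slab[OF s] by (intro power_mono) auto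
  then show ?thesis using x by (simp add: field_simps) (use norm_ge_zero[of x] in linarith)
qed

lemma pullback_outside_disc:
  "s \<in> {s0..s1} \<Longrightarrow> s1\<^sup>2 \<le> norm x \<Longrightarrow> hyp_pullback f (s, x) = 0"
  using pullback_outside norm_less_if_inside by fastforce

lemma pullback_outside_square:
  assumes s: "s \<in> {s0..s1}" and x: "x \<notin> cbox (-s1\<^sup>2, -s1\<^sup>2) (s1\<^sup>2, s1\<^sup>2)"
  shows "hyp_pullback f (s, x) = 0"
proof -
  have "s1\<^sup>2 < \<bar>fst x\<bar> \<or> s1\<^sup>2 < \<bar>snd x\<bar>" using x by (cases x) auto
  then have "s1\<^sup>2 \<le> norm x"
    using norm_fst_le[of "fst x" "snd x"] norm_snd_le[of "snd x" "fst x"] by auto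
  then show ?thesis by (rule pullback_outside_disc[OF s])
qed

lemma pullback_has_derivative_inside:
  assumes s: "s \<in> {s0..s1}" and x: "norm x < (s\<^sup>2 - 1) / 2"
  shows "(hyp_pullback u has_derivative (\<lambda>h. dbar_s ut (hpt s x) * fst h
      + dbar_1 ut u1 (hpt s x) * fst (snd h) + dbar_2 ut u2 (hpt s x) * snd (snd h)))
    (at (s, x) within {s0..s1} \<times> UNIV)" (is "(_ has_derivative ?L) _")
proof -
  define S where "S = {s0..s1} \<times> UNIV \<inter> inside_cone"
  have sx: "(s, x) \<in> S" using s x by (simp add: S_def inside_cone_def)
  have img: "(\<lambda>q. hpt (fst q) (snd q)) ` S \<subseteq> Kseg s0 s1"
    using hpt_in_Kseg by (auto simp: S_def inside_cone_def)
  have du: "(u has_derivative (\<lambda>h. ut p * fst h + u1 p * fst (snd h) + u2 p * snd (snd h)))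
      (at p within Kseg s0 s1)" if "p \<in> Kseg s0 s1" for p
    using C1 that unfolding C1_on_def by blast
  have t: "sqrt (s\<^sup>2 + (norm x)\<^sup>2) > 0" using pos_of_slab[OF s] by (simp add: add_pos_nonneg)
  note chain = has_derivative_in_compose2[OF du img sx hpt_has_derivative[OF pos_of_slab[OF s]]]
  have "((\<lambda>q. u (hpt (fst q) (snd q))) has_derivative ?L) (at (s, x) within S)"
    using pos_of_slab[OF s] t
    by (intro has_derivative_eq_rhs[OF chain])
       (auto simp: fun_eq_iff dbar_s_def dbar_1_def dbar_2_def field_simps)
  then have "(hyp_pullback u has_derivative ?L) (at (s, x) within S)"
    by (rule has_derivative_transform_within[OF _ zero_less_one sx])
       (use pullback_inside in \<open>auto simp: S_def inside_cone_def\<close>)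
  moreover have "at (s, x) within S = at (s, x) within {s0..s1} \<times> UNIV"
    using sx open_inside_cone by (intro at_within_nhd[of _ inside_cone]) (auto simp: S_def)
  ultimately show ?thesis by simp
qed

lemma pullback_has_zero_derivative_near_cone:
  assumes s: "s \<in> {s0..s1}" and x: "(s\<^sup>2 - 1) / 2 - \<delta> < norm x"
  shows "(hyp_pullback u has_derivative (\<lambda>h. 0)) (at (s, x) within {s0..s1} \<times> UNIV)"
proof -
  have "(s, x) \<in> near_cone" using x by (simp add: near_cone_def)
  then obtain d where "d > 0" "ball (s, x) d \<subseteq> near_cone"
    using openE[OF open_near_cone] by metis
  then show ?thesis
    by (intro has_derivative_transform_within[OF has_derivative_const \<open>d > 0\<close>])
       (use s in \<open>auto simp: near_cone_def dist_commute pullback_u_near_cone mem_ball subset_iff\<close>)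
qed

lemma dbar_zero_near_cone:
  assumes s: "s \<in> {s0..s1}" and band: "(s\<^sup>2 - 1) / 2 - \<delta> < norm x" and x: "norm x < (s\<^sup>2 - 1) / 2"
  shows "dbar_s ut (hpt s x) = 0" "dbar_1 ut u1 (hpt s x) = 0" "dbar_2 ut u2 (hpt s x) = 0"
proof -
  define R where "R = s1\<^sup>2"
  define B where "B = cbox (s0, -R, -R) (s1, R, R)"
  have "norm x \<le> R" using norm_less_if_inside[OF s x] by (simp add: R_def)
  then have "\<bar>fst x\<bar> \<le> R" "\<bar>snd x\<bar> \<le> R"
    using norm_fst_le[of "fst x" "snd x"] norm_snd_le[of "snd x" "fst x"] by auto
  then have sx: "(s, x) \<in> B" using s by (cases x) (auto simp: B_def)
  have "B \<subseteq> {s0..s1} \<times> UNIV" by (auto simp: B_def)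
  have "0 < R" using one_less_s0 s0_less_s1 by (simp add: R_def)
  then have "(s0, -R, -R) \<bullet> i < (s1, R, R) \<bullet> i" if "i \<in> Basis" for i
    using that s0_less_s1 by (auto simp: Basis_prod_def)
  \<comment> \<open>the chain rule and the local vanishing of \<open>u\<close> give two derivatives at \<open>(s, x)\<close>\<close>
  from frechet_derivative_unique_within_closed_interval[OF this sx[unfolded B_def]
      has_derivative_subset[OF pullback_has_derivative_inside[OF s x]]
      has_derivative_subset[OF pullback_has_zero_derivative_near_cone[OF s band]]]
  have "(\<lambda>h. dbar_s ut (hpt s x) * fst h + dbar_1 ut u1 (hpt s x) * fst (snd h)
      + dbar_2 ut u2 (hpt s x) * snd (snd h)) = (\<lambda>h. 0)"
    using \<open>B \<subseteq> _\<close> unfolding B_def by blast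
  from fun_cong[OF this, of "(1, 0, 0)"] fun_cong[OF this, of "(0, 1, 0)"] fun_cong[OF this, of "(0, 0, 1)"]
  show "dbar_s ut (hpt s x) = 0" "dbar_1 ut u1 (hpt s x) = 0" "dbar_2 ut u2 (hpt s x) = 0"
    by simp_all
qed

lemma pullback_has_derivative:
  assumes "q \<in> {s0..s1} \<times> UNIV"
  shows "(hyp_pullback u has_derivative (\<lambda>h. hyp_pullback (dbar_s ut) q * fst h
      + hyp_pullback (dbar_1 ut u1) q * fst (snd h) + hyp_pullback (dbar_2 ut u2) q * snd (snd h)))
    (at q within {s0..s1} \<times> UNIV)"
proof -
  obtain s x where q: "q = (s, x)" and s: "s \<in> {s0..s1}" using assms by auto
  show ?thesis
  proof (cases "norm x < (s\<^sup>2 - 1) / 2")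
    case True
    then show ?thesis using pullback_has_derivative_inside[OF s] pullback_inside[OF s] q by simp
  next
    case False
    then have "(s\<^sup>2 - 1) / 2 - \<delta> < norm x"
      using inside_or_near_cone[of "(s, x)"] by (simp add: inside_cone_def near_cone_def)
    then show ?thesis
      using pullback_has_zero_derivative_near_cone[OF s] pullback_outside[OF s False] q by simp
  qed
qed

lemma pullback_zero_near_cone:
  assumes s: "s \<in> {s0..s1}" and band: "(s\<^sup>2 - 1) / 2 - \<delta> < norm x"
    and F: "F \<in> {u, dbar_s ut, dbar_1 ut u1, dbar_2 ut u2}"
  shows "hyp_pullback F (s, x) = 0"
proof (cases "norm x < (s\<^sup>2 - 1) / 2")
  case True
  then show ?thesis
    using F pullback_u_near_cone[OF s band] dbar_zero_near_cone[OF s band True] pullback_inside[OF s True]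
    by auto
qed (use pullback_outside[OF s] in auto)

lemma continuous_on_Kseg:
  assumes "F \<in> {u, dbar_s ut, dbar_1 ut u1, dbar_2 ut u2}"
  shows "continuous_on (Kseg s0 s1) F"
proof -
  have "continuous_on (Kseg s0 s1) u"
    using C1 unfolding C1_on_def continuous_on_eq_continuous_within
    by (auto intro: has_derivative_continuous)
  moreover have "continuous_on (Kseg s0 s1) ut" "continuous_on (Kseg s0 s1) u1" "continuous_on (Kseg s0 s1) u2"
    using C1 unfolding C1_on_def by auto
  moreover have "fst p \<noteq> 0" if "p \<in> Kseg s0 s1" for p
  proof -
    have "norm (snd p) + 1 < fst p" using that by (simp add: Kseg_def Kcone_def)
    then show ?thesis using norm_ge_zero[of "snd p"] by linarith
  qed
  ultimately show ?thesis
    using assms unfolding dbar_s_def dbar_1_def dbar_2_def hs_def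
    by (auto intro!: continuous_intros)
qed

lemma continuous_on_pullback:
  assumes "F \<in> {u, dbar_s ut, dbar_1 ut u1, dbar_2 ut u2}"
  shows "continuous_on ({s0..s1} \<times> UNIV) (hyp_pullback F)"
proof -
  define \<Sigma> :: "(real \<times> real \<times> real) set" where "\<Sigma> = {s0..s1} \<times> UNIV"
  define N1 where "N1 = inside_cone"
  define N2 where "N2 = near_cone"
  have split: "\<Sigma> = (\<Sigma> \<inter> N1) \<union> (\<Sigma> \<inter> N2)"
    using inside_or_near_cone unfolding N1_def N2_def by blast
  have "continuous_on (\<Sigma> \<inter> N1) (\<lambda>q. hpt (fst q) (snd q))"
    unfolding hpt_def by (intro continuous_intros)
  moreover have "(\<lambda>q. hpt (fst q) (snd q)) ` (\<Sigma> \<inter> N1) \<subseteq> Kseg s0 s1"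
    using hpt_in_Kseg by (auto simp: \<Sigma>_def N1_def inside_cone_def)
  ultimately have "continuous_on (\<Sigma> \<inter> N1) (\<lambda>q. F (hpt (fst q) (snd q)))"
    by (rule continuous_on_compose2[OF continuous_on_Kseg[OF assms]])
  then have c1: "continuous_on (\<Sigma> \<inter> N1) (hyp_pullback F)"
    by (rule continuous_on_eq) (auto simp: \<Sigma>_def N1_def inside_cone_def pullback_inside)
  have c2: "continuous_on (\<Sigma> \<inter> N2) (hyp_pullback F)"
    by (rule continuous_on_eq[OF continuous_on_const])
       (auto simp: \<Sigma>_def N2_def near_cone_def pullback_zero_near_cone[OF _ _ assms])
  have "openin (top_of_set \<Sigma>) (\<Sigma> \<inter> N1)" "openin (top_of_set \<Sigma>) (\<Sigma> \<inter> N2)"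
    unfolding N1_def N2_def by (intro openin_open_Int open_inside_cone open_near_cone)+
  then have "continuous_on ((\<Sigma> \<inter> N1) \<union> (\<Sigma> \<inter> N2)) (hyp_pullback F)"
    by (intro continuous_on_Un_local_open c1 c2) (simp_all only: split[symmetric])
  then show ?thesis unfolding \<Sigma>_def[symmetric] using split by metis
qed

end

text \<open>Any square containing the discs \<open>H_s \<inter> K\<close>, of radius \<open>(s\<^sup>2 - 1)/2\<close>, would do.\<close>

sublocale vanishing_near_cone \<subseteq> slab: dirichlet_slab s0 s1 "s1\<^sup>2" "hyp_pullback u"
  "hyp_pullback (dbar_s ut)" "hyp_pullback (dbar_1 ut u1)" "hyp_pullback (dbar_2 ut u2)"
proof
  show "0 < s0" "s0 < s1" "0 \<le> s1\<^sup>2" using one_less_s0 s0_less_s1 by auto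
  have sub: "{s0..s1} \<times> cbox (- s1\<^sup>2, - s1\<^sup>2) (s1\<^sup>2, s1\<^sup>2) \<subseteq> {s0..s1} \<times> UNIV" by auto
  have "continuous_on ({s0..s1} \<times> cbox (- s1\<^sup>2, - s1\<^sup>2) (s1\<^sup>2, s1\<^sup>2)) (hyp_pullback F)"
    if "F \<in> {u, dbar_s ut, dbar_1 ut u1, dbar_2 ut u2}" for F
    using continuous_on_subset[OF continuous_on_pullback[OF that] sub] .
  then show "continuous_on ({s0..s1} \<times> cbox (- s1\<^sup>2, - s1\<^sup>2) (s1\<^sup>2, s1\<^sup>2)) (hyp_pullback u)"
    "continuous_on ({s0..s1} \<times> cbox (- s1\<^sup>2, - s1\<^sup>2) (s1\<^sup>2, s1\<^sup>2)) (hyp_pullback (dbar_s ut))"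
    "continuous_on ({s0..s1} \<times> cbox (- s1\<^sup>2, - s1\<^sup>2) (s1\<^sup>2, s1\<^sup>2)) (hyp_pullback (dbar_1 ut u1))"
    "continuous_on ({s0..s1} \<times> cbox (- s1\<^sup>2, - s1\<^sup>2) (s1\<^sup>2, s1\<^sup>2)) (hyp_pullback (dbar_2 ut u2))"
    by simp_all
  show "(hyp_pullback u has_derivative (\<lambda>h. hyp_pullback (dbar_s ut) q * fst h
      + hyp_pullback (dbar_1 ut u1) q * fst (snd h) + hyp_pullback (dbar_2 ut u2) q * snd (snd h)))
    (at q within {s0..s1} \<times> cbox (- s1\<^sup>2, - s1\<^sup>2) (s1\<^sup>2, s1\<^sup>2))"
    if "q \<in> {s0..s1} \<times> cbox (- s1\<^sup>2, - s1\<^sup>2) (s1\<^sup>2, s1\<^sup>2)" for q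
    using has_derivative_subset[OF pullback_has_derivative sub] that by auto
  show "hyp_pullback u (s, y1, y2) = 0" if "s \<in> {s0..s1}" "\<bar>y1\<bar> = s1\<^sup>2 \<or> \<bar>y2\<bar> = s1\<^sup>2" for s y1 y2
    using pullback_outside_disc[OF that(1)] that(2)
      norm_fst_le[of y1 y2] norm_snd_le[of y2 y1] by auto
qed

context vanishing_near_cone
begin

lemma L2H_eq_sqrt_wnorm:
  assumes s: "s \<in> {s0..s1}"
  shows "L2H s (\<lambda>p. (hs p / fst p) * u p) = sqrt (slab.wnorm s)"
proof -
  have s0: "s \<ge> 0" using pos_of_slab[OF s] by simp
  have "zext (\<lambda>p. ((hs p / fst p) * u p)\<^sup>2) (hpt s x) = s\<^sup>2 * (hyp_pullback u (s, x))\<^sup>2 / tsq s x" for x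
    using s0 by (simp add: zext_def hyp_pullback_def norm_sq_pair power_mult_distrib
        power_divide add_nonneg_nonneg add.assoc)
  moreover have "integral\<^sup>L lborel (\<lambda>x. s\<^sup>2 * (hyp_pullback u (s, x))\<^sup>2 / tsq s x) = slab.wnorm s"
    unfolding slab.wnorm_def
    using slab.tsq_pos[OF s] s pullback_outside_square[OF s]
    by (intro integral_lborel_eq_integral_cbox continuous_intros) (auto simp: less_imp_neq[symmetric])
  ultimately show ?thesis unfolding L2H_def intH_def by simp
qed

lemma Econ_eq_cenergy:
  assumes s: "s \<in> {s0..s1}"
  shows "Econ s u ut u1 u2 = slab.cenergy s"
proof -
  have s0: "s \<ge> 0" using pos_of_slab[OF s] by simp
  have "zext (\<lambda>p. (Kop ut u1 u2 p + u p)\<^sup>2 + (s * dbar_1 ut u1 p)\<^sup>2 + (s * dbar_2 ut u2 p)\<^sup>2) (hpt s x)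
      = (slab.kpart s x)\<^sup>2 + (s * hyp_pullback (dbar_1 ut u1) (s, x))\<^sup>2
        + (s * hyp_pullback (dbar_2 ut u2) (s, x))\<^sup>2" for x
    using s0 by (simp add: zext_def hyp_pullback_def slab.kpart_def Kop_def)
  moreover have "integral\<^sup>L lborel (\<lambda>x. (slab.kpart s x)\<^sup>2 + (s * hyp_pullback (dbar_1 ut u1) (s, x))\<^sup>2
        + (s * hyp_pullback (dbar_2 ut u2) (s, x))\<^sup>2) = slab.cenergy s"
    unfolding slab.cenergy_def slab.kpart_def
    using s pullback_outside_square[OF s]
    by (intro integral_lborel_eq_integral_cbox continuous_intros) auto
  ultimately show ?thesis unfolding Econ_def intH_def by simp
qed

lemma energy_integral_eq:
  "(\<integral>s\<in>{s0..s1}. (1 / s) * sqrt (Econ s u ut u1 u2) \<partial>lborel)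
    = integral {s0..s1} (\<lambda>s. 1 / s * sqrt (slab.cenergy s))"
proof -
  have "continuous_on {s0..s1} (\<lambda>s. 1 / s * sqrt (slab.cenergy s))"
    using one_less_s0 by (intro continuous_intros slab.continuous_on_cenergy) auto
  then have "(\<integral>s\<in>{s0..s1}. (1 / s) * sqrt (slab.cenergy s) \<partial>lborel)
      = integral {s0..s1} (\<lambda>s. 1 / s * sqrt (slab.cenergy s))"
    by (rule set_borel_integral_eq_integral(2)[OF borel_integrable_atLeastAtMost'])
  moreover have "(\<integral>s\<in>{s0..s1}. (1 / s) * sqrt (Econ s u ut u1 u2) \<partial>lborel)
      = (\<integral>s\<in>{s0..s1}. (1 / s) * sqrt (slab.cenergy s) \<partial>lborel)"
    by (rule set_lebesgue_integral_cong) (auto simp: Econ_eq_cenergy)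
  ultimately show ?thesis by simp
qed

theorem energy_estimate:
  "L2H s1 (\<lambda>p. (hs p / fst p) * u p)
    \<le> L2H s0 (\<lambda>p. (hs p / fst p) * u p)
       + sqrt 2 * (\<integral>s\<in>{s0..s1}. (1 / s) * sqrt (Econ s u ut u1 u2) \<partial>lborel)"
proof -
  have "s0 \<in> {s0..s1}" "s1 \<in> {s0..s1}" using s0_less_s1 by auto
  then show ?thesis
    using slab.sqrt_wnorm_le by (simp only: L2H_eq_sqrt_wnorm energy_integral_eq)
qed

end

lemma energy_estimate_if_vanishing_near_cone_bdry:
  assumes s: "1 < s0" "s0 < s1" and C1: "C1_on (Kseg s0 s1) u ut u1 u2"
    and V: "open V" "cone_bdry \<subseteq> V" and uV: "\<forall>p\<in>Kseg s0 s1 \<inter> V. u p = 0"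
  shows "L2H s1 (\<lambda>p. (hs p / fst p) * u p)
    \<le> L2H s0 (\<lambda>p. (hs p / fst p) * u p)
       + sqrt 2 * (\<integral>s\<in>{s0..s1}. (1 / s) * sqrt (Econ s u ut u1 u2) \<partial>lborel)"
proof -
  obtain \<delta> where "\<delta> > 0" and band:
    "\<And>s x. s \<in> {s0..s1} \<Longrightarrow> (s\<^sup>2 - 1) / 2 - \<delta> < norm x \<Longrightarrow> norm x < (s\<^sup>2 - 1) / 2 \<Longrightarrow> hpt s x \<in> V"
    using band_near_cone_in_open_nhd[of s0 V s1] s V by auto
  interpret vanishing_near_cone s0 s1 \<delta> u ut u1 u2
  proof
    show "u (hpt s x) = 0"
      if "s \<in> {s0..s1}" "(s\<^sup>2 - 1) / 2 - \<delta> < norm x" "norm x < (s\<^sup>2 - 1) / 2" for s x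
      using uV band[OF that] hpt_in_Kseg_iff[of s0 s s1 x] that s by auto
  qed (use s C1 \<open>\<delta> > 0\<close> in auto)
  show ?thesis by (rule energy_estimate)
qed

theorem lemma2p2:
  shows "\<exists>C::real. \<forall>s0 s1 :: real. \<forall>u ut u1 u2 :: pt \<Rightarrow> real.
    1 < s0 \<and> s0 < s1 \<and>
    C1_on (Kseg s0 s1) u ut u1 u2 \<and>
    (\<exists>V. open V \<and> cone_bdry \<subseteq> V \<and> (\<forall>p \<in> Kseg s0 s1 \<inter> V. u p = 0))
    \<longrightarrow>
    L2H s1 (\<lambda>p. (hs p / fst p) * u p)
      \<le> L2H s0 (\<lambda>p. (hs p / fst p) * u p)
         + C * (\<integral>s\<in>{s0..s1}. (1 / s) * sqrt (Econ s u ut u1 u2) \<partial>lborel)"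
  using energy_estimate_if_vanishing_near_cone_bdry by blast

end
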